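(* Consider the joint regression model described in the context, and let Assumptions (A1)–(A5) hold. Suppose that $(T_1,C_1)$ satisfies the model with parameter vector $(\gamma,\theta)$ and $(T_2,C_2)$ satisfies the model with parameter vector $(\gamma^*,\theta^* )$ (with the same observed covariates $(W,Z)$), and let $Y_j=\min\{T_j,C_j\}$, $\Delta_j=\mathbb{1}(T_j\le C_j)$, $j=1,2$. If $$f_{Y_1,\Delta_1\mid W,Z}(\cdot,k\mid w,z,\gamma;\theta)\equiv f_{Y_2,\Delta_2\mid W,Z}(\cdot,k\mid w,z,\gamma^*;\theta^* )$$ for $k\in\{0,1\}$ and almost every $(w,z)$, then $\gamma=\gamma^*$ and $\theta=\theta^*$.
   Context: Let $m\ge 0$ be an integer. Observed covariates are $\tilde X\in\mathbb{R}^m$, a scalar $Z$ and a scalar instrument $\tilde W$; put $X=(1,\tilde X^\top)^\top$ and $W=(X^\top,\tilde W)^\top\in\mathbb{R}^{m+2}$. Let $\Gamma$ be a parameter set and $(z,w,\gamma)\mapsto g_\gamma(z,w)\in\mathbb{R}$ a known function (the control function). The model with parameter $(\gamma,\theta)$, $\theta=(\beta_T,\alpha_T,\lambda_T,\beta_C,\alpha_C,\lambda_C,\sigma_T,\sigma_C,\rho)$ with $\beta_T,\beta_C\in\mathbb{R}^{m+1}$, $\alpha_T,\lambda_T,\alpha_C,\lambda_C\in\mathbb{R}$, $\sigma_T,\sigma_C>0$, $\rho\in(-1,1)$, is $$T=X^\top\beta_T+Z\alpha_T+V\lambda_T+\epsilon_T,\qquad C=X^\top\beta_C+Z\alpha_C+V\lambda_C+\epsilon_C,\qquad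 V=g_\gamma(Z,W),$$ where $T,C$ are the log survival and log censoring times; one observes $Y=\min\{T,C\}$, $\Delta=\mathbb{1}(T\le C)$, $W$, $Z$. The true parameter is $(\gamma^*,\theta^* )$. Assumptions: (A1) $(\epsilon_T,\epsilon_C)^\top\sim N_2\big(0,\begin{pmatrix}\sigma_T^2&\rho\sigma_T\sigma_C\\ \rho\sigma_T\sigma_C&\sigma_C^2\end{pmatrix}\big)$ with $\sigma_T,\sigma_C>0$, $|\rho|<1$; (A2) $(\epsilon_T,\epsilon_C)$ is independent of $(W,Z)$; (A3) the covariance matrix of $(\tilde X^\top,Z,V)$ is full rank and $\mathrm{Var}(\tilde W)>0$; (A4) $\mathbb{P}(Y=T\mid W,Z)>0$ and $\mathbb{P}(Y=C\mid W,Z)>0$ almost surely; (A5) the true parameter $\gamma^*$ is identified (uniquely determined by the distribution of the observed data). For $w=(x^\top,\tilde w)^\top$, $z$, $y\in\mathbb{R}$, let $b_T=y-x^\top\beta_T-z\alpha_T-g_\gamma(z,w)\lambda_T$ and $b_C=y-x^\top\beta_C-z\alpha_C-g_\gamma(z,w)\lambda_C$. The conditional sub-densities of $(Y,\Delta)$ given $(W,Z)=(w,z)$ under parameter $(\gamma,\theta)$ are $$f_{Y,\Delta\mid W,Z}(y,1\mid w,z,\gamma;\theta)=\frac1{\sigma_T}\Big[1-\Phi\Big(\frac{b_C-\rho\frac{\sigma_C}{\sigma_T}b_T}{\sigma_C(1-\rho^2)^{1/2}}\Big)\Big]\phi\Big(\frac{b_T}{\sigma_T}\Big),$$ $$f_{Y,\Delta\mid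 W,Z}(y,0\mid w,z,\gamma;\theta)=\frac1{\sigma_C}\Big[1-\Phi\Big(\frac{b_T-\rho\frac{\sigma_T}{\sigma_C}b_C}{\sigma_T(1-\rho^2)^{1/2}}\Big)\Big]\phi\Big(\frac{b_C}{\sigma_C}\Big),$$ where $\Phi,\phi$ are the standard normal distribution and density functions. *)

theory Defs
  imports "HOL-Probability.Probability"
begin

definition std_normal_cdf :: "real \<Rightarrow> real" where
  "std_normal_cdf x = (\<integral>t\<in>{..x}. std_normal_density t \<partial>lborel)"

(* theta = (beta_T, alpha_T, lambda_T, beta_C, alpha_C, lambda_C, sigma_T, sigma_C, rho).
   beta_T, beta_C in R^(m+1) are real lists of length m+1; entry 0 multiplies
   the intercept 1 of X = (1, Xtilde), entry i+1 multiplies Xtilde_i. *)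
record theta =
  betaT :: "real list"
  alphaT :: real
  lambdaT :: real
  betaC :: "real list"
  alphaC :: real
  lambdaC :: real
  sigmaT :: real
  sigmaC :: real
  rho :: real

definition valid_theta :: "nat \<Rightarrow> theta \<Rightarrow> bool" where
  "valid_theta m th \<longleftrightarrow> length (betaT th) = m + 1 \<and> length (betaC th) = m + 1 \<and>
     sigmaT th > 0 \<and> sigmaC th > 0 \<and> \<bar>rho th\<bar> < 1"

(* x^T beta with x = (1, xt), xt a list of length m *)
definition lin :: "real list \<Rightarrow> real list \<Rightarrow> real" where
  "lin xt b = b ! 0 + (\<Sum>i<length xt. xt ! i * b ! (i + 1))"

(* The control function g_gamma(z, w), w = (1, xt, wt), is represented by
   g gamma z xt wt.  The conditional sub-density f_{Y,Delta|W,Z}(y, k | w, z, gamma; theta)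
   for w = (1, xt, wt): *)
definition subdens ::
  "('g \<Rightarrow> real \<Rightarrow> real list \<Rightarrow> real \<Rightarrow> real) \<Rightarrow> 'g \<Rightarrow> theta \<Rightarrow>
   real list \<Rightarrow> real \<Rightarrow> real \<Rightarrow> real \<Rightarrow> nat \<Rightarrow> real" where
  "subdens g \<gamma> th xt wt z y k =
    (let v = g \<gamma> z xt wt;
         bT = y - lin xt (betaT th) - z * alphaT th - v * lambdaT th;
         bC = y - lin xt (betaC th) - z * alphaC th - v * lambdaC th;
         sT = sigmaT th; sC = sigmaC th; r = rho th
     in if k = 1 then
          (1 / sT) * (1 - std_normal_cdf ((bC - r * (sC / sT) * bT) / (sC * sqrt (1 - r\<^sup>2))))
            * std_normal_density (bT / sT)
        else
          (1 / sC) * (1 - std_normal_cdf ((bT - r * (sT / sC) * bC) / (sT * sqrt (1 - r\<^sup>2))))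
            * std_normal_density (bC / sC))"

definition full_rank_mat :: "nat \<Rightarrow> (nat \<Rightarrow> nat \<Rightarrow> real) \<Rightarrow> bool" where
  "full_rank_mat n M \<longleftrightarrow>
     (\<forall>a. (\<forall>i<n. (\<Sum>j<n. M i j * a j) = 0) \<longrightarrow> (\<forall>j<n. a j = 0))"

definition cov_matrix :: "'a measure \<Rightarrow> ('a \<Rightarrow> nat \<Rightarrow> real) \<Rightarrow> nat \<Rightarrow> nat \<Rightarrow> real" where
  "cov_matrix M U i j =
     (\<integral>\<omega>. U \<omega> i * U \<omega> j \<partial>M) - (\<integral>\<omega>. U \<omega> i \<partial>M) * (\<integral>\<omega>. U \<omega> j \<partial>M)"

end

theory Submission
  imports Defs "HOL-Real_Asymp.Real_Asymp"
begin

text \<open>Once \<open>\<gamma> = \<gamma>*\<close> is known from (A5), both sub-densities at a fixed \<open>(w, z)\<close> have the form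
  \<open>(1 - \<Phi>(c y + d)) \<phi>((y - a)/\<sigma>)/\<sigma>\<close>. Such a function determines \<open>(\<sigma>, a, c, d)\<close>: take
  logarithms and let \<open>y \<rightarrow> -\<infinity>\<close>. If the slopes \<open>c\<close> had opposite signs, the Gaussian tail bound
  \<open>1 - \<Phi>(u) \<le> exp(-u\<^sup>2/2)\<close> would force two incompatible inequalities between the leading
  coefficients; if they have equal signs, the difference of the two log normal densities is a
  bounded quadratic, hence constant. This yields \<open>\<sigma>\<^sub>T\<close>, \<open>\<sigma>\<^sub>C\<close>, the two conditional means, and
  \<open>\<rho>\<close> (from the two slopes). A linear combination of the non-constant covariates and \<open>V\<close> that
  is a.s. constant has zero coefficients when their covariance matrix is nonsingular, so the
  conditional means identify the regression coefficients.\<close>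

definition std_normal_tail :: "real \<Rightarrow> real" where
  "std_normal_tail u = 1 - std_normal_cdf u"

lemma integrable_indicator_std_normal_density:
  "A \<in> sets borel \<Longrightarrow> integrable lborel (\<lambda>t. indicator A t * std_normal_density t)"
  using integrable_real_mult_indicator[of A lborel std_normal_density] by (simp add: mult.commute)

lemma std_normal_cdf_eq_integral:
  "std_normal_cdf x = (\<integral>t. indicator {..x} t * std_normal_density t \<partial>lborel)"
  unfolding std_normal_cdf_def set_lebesgue_integral_def by simp

lemma std_normal_tail_eq_integral:
  "std_normal_tail u = (\<integral>t. indicator {u<..} t * std_normal_density t \<partial>lborel)"
proof -
  have "std_normal_cdf u + (\<integral>t. indicator {u<..} t * std_normal_density t \<partial>lborel)
      = (\<integral>t. indicator {..u} t * std_normal_density t + indicator {u<..} t * std_normal_density t \<partial>lborel)"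
    unfolding std_normal_cdf_eq_integral
    by (rule Bochner_Integration.integral_add[symmetric]) (auto intro: integrable_indicator_std_normal_density)
  also have "\<dots> = (\<integral>t. std_normal_density t \<partial>lborel)"
    by (rule Bochner_Integration.integral_cong) (auto simp: indicator_def)
  finally show ?thesis unfolding std_normal_tail_def by simp
qed

lemma integral_std_normal_density_interval_pos:
  assumes "u < v"
  shows "0 < (\<integral>t. indicator {u<..v} t * std_normal_density t \<partial>lborel)"
proof -
  define B where "B = max \<bar>u\<bar> \<bar>v\<bar>"
  define c where "c = std_normal_density B"
  have "0 < c * (v - u)"
    using assms normal_density_pos[of 1] by (simp add: c_def)
  also have "c * (v - u) = (\<integral>t. indicator {u<..v} t * c \<partial>lborel)"
    using assms by simp
  also have "\<dots> \<le> (\<integral>t. indicator {u<..v} t * std_normal_density t \<partial>lborel)"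
  proof (rule integral_mono)
    show "integrable lborel (\<lambda>t. indicator {u<..v} t * c)"
      using assms by (simp add: integrable_real_indicator)
    show "integrable lborel (\<lambda>t. indicator {u<..v} t * std_normal_density t)"
      by (simp add: integrable_indicator_std_normal_density)
    fix t
    show "indicator {u<..v} t * c \<le> indicator {u<..v} t * std_normal_density t"
    proof (cases "t \<in> {u<..v}")
      case True
      then have "\<bar>t\<bar> \<le> \<bar>B\<bar>"
        by (auto simp: B_def)
      then have "t\<^sup>2 \<le> B\<^sup>2"
        by (simp only: abs_le_square_iff)
      with True show ?thesis
        by (simp add: c_def std_normal_density_def divide_right_mono)
    qed simp
  qed
  finally show ?thesis .
qed

lemma std_normal_cdf_strict_mono: "strict_mono std_normal_cdf"
proof (rule strict_monoI)
  fix u v :: real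
  assume "u < v"
  have "std_normal_cdf v = (\<integral>t. indicator {..u} t * std_normal_density t
                              + indicator {u<..v} t * std_normal_density t \<partial>lborel)"
    unfolding std_normal_cdf_eq_integral using \<open>u < v\<close>
    by (intro Bochner_Integration.integral_cong) (auto simp: indicator_def)
  also have "\<dots> = std_normal_cdf u + (\<integral>t. indicator {u<..v} t * std_normal_density t \<partial>lborel)"
    unfolding std_normal_cdf_eq_integral
    by (rule Bochner_Integration.integral_add) (auto intro: integrable_indicator_std_normal_density)
  finally show "std_normal_cdf u < std_normal_cdf v"
    using integral_std_normal_density_interval_pos[OF \<open>u < v\<close>] by simp
qed

lemma std_normal_tail_le_iff [simp]: "std_normal_tail u \<le> std_normal_tail v \<longleftrightarrow> v \<le> u"
  using std_normal_cdf_strict_mono unfolding std_normal_tail_def by (simp add: strict_mono_less_eq)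

lemma std_normal_tail_eq_iff [simp]: "std_normal_tail u = std_normal_tail v \<longleftrightarrow> u = v"
  by (metis order.eq_iff std_normal_tail_le_iff)

lemma std_normal_tail_pos: "0 < std_normal_tail u"
proof -
  have "(\<integral>t. indicator {u<..u+1} t * std_normal_density t \<partial>lborel)
      \<le> (\<integral>t. indicator {u<..} t * std_normal_density t \<partial>lborel)"
    by (intro integral_mono integrable_indicator_std_normal_density) (auto simp: indicator_def)
  then show ?thesis
    using integral_std_normal_density_interval_pos[of u "u+1"] unfolding std_normal_tail_eq_integral
    by simp
qed

lemma std_normal_tail_le_1: "std_normal_tail u \<le> 1"
  unfolding std_normal_tail_def std_normal_cdf_eq_integral by (simp add: integral_nonneg_AE)

text \<open>Chernoff bound, from \<open>exp (-t\<^sup>2/2) \<le> exp (-u\<^sup>2/2) * exp (-(t - u)\<^sup>2/2)\<close> for \<open>t \<ge> u \<ge> 0\<close>.\<close>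
lemma std_normal_tail_le_exp:
  assumes "0 \<le> u"
  shows "std_normal_tail u \<le> exp (- u\<^sup>2 / 2)"
proof -
  have "std_normal_tail u \<le> (\<integral>t. exp (- u\<^sup>2 / 2) * normal_density u 1 t \<partial>lborel)"
    unfolding std_normal_tail_eq_integral
  proof (rule integral_mono)
    show "integrable lborel (\<lambda>t. indicator {u<..} t * std_normal_density t)"
      by (simp add: integrable_indicator_std_normal_density)
    show "integrable lborel (\<lambda>t. exp (- u\<^sup>2 / 2) * normal_density u 1 t)"
      by simp
    fix t
    show "indicator {u<..} t * std_normal_density t \<le> exp (- u\<^sup>2 / 2) * normal_density u 1 t"
    proof (cases "u < t")
      case True
      with assms have "u * u \<le> t * u"
        by (intro mult_right_mono) auto
      then have "- t\<^sup>2 / 2 \<le> - u\<^sup>2 / 2 + - (t - u)\<^sup>2 / 2"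
        by (simp add: power2_eq_square algebra_simps)
      then have "exp (- t\<^sup>2 / 2) \<le> exp (- u\<^sup>2 / 2) * exp (- (t - u)\<^sup>2 / 2)"
        by (simp add: exp_add[symmetric])
      with True show ?thesis
        by (simp add: std_normal_density_def normal_density_def divide_right_mono)
    qed simp
  qed
  then show ?thesis
    by simp
qed

lemma quadratic_bounded_above_at_bot:
  fixes c2 c1 c0 M :: real
  assumes "\<forall>\<^sub>F y in at_bot. c2 * y\<^sup>2 + c1 * y + c0 \<le> M"
  shows "c2 < 0 \<or> c2 = 0 \<and> 0 \<le> c1"
proof (rule ccontr)
  assume "\<not> ?thesis"
  then have "0 < c2 \<or> c2 = 0 \<and> c1 < 0" by auto
  then have "filterlim (\<lambda>y. c2 * y\<^sup>2 + c1 * y + c0) at_top at_bot"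
    by (elim disjE conjE) (real_asymp, simp, real_asymp)
  then have "\<forall>\<^sub>F y in at_bot. M + 1 \<le> c2 * y\<^sup>2 + c1 * y + c0"
    by (simp add: filterlim_at_top)
  with assms have "\<forall>\<^sub>F y in at_bot. c2 * y\<^sup>2 + c1 * y + c0 \<le> M \<and> M + 1 \<le> c2 * y\<^sup>2 + c1 * y + c0"
    by (rule eventually_conj)
  then show False
    by (auto simp: eventually_at_bot_linorder)
qed

lemma quadratic_bounded_at_bot:
  fixes c2 c1 c0 M :: real
  assumes "\<forall>\<^sub>F y in at_bot. \<bar>c2 * y\<^sup>2 + c1 * y + c0\<bar> \<le> M"
  shows "c2 = 0 \<and> c1 = 0"
proof -
  have "\<forall>\<^sub>F y in at_bot. c2 * y\<^sup>2 + c1 * y + c0 \<le> M"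
    and "\<forall>\<^sub>F y in at_bot. (- c2) * y\<^sup>2 + (- c1) * y + (- c0) \<le> M"
    using assms by (eventually_elim, simp add: abs_le_iff)+
  from this[THEN quadratic_bounded_above_at_bot] show ?thesis
    by auto
qed

definition tail_weighted_density :: "real \<Rightarrow> real \<Rightarrow> real \<Rightarrow> real \<Rightarrow> real \<Rightarrow> real" where
  "tail_weighted_density \<sigma> a c d y = std_normal_tail (c * y + d) * normal_density a \<sigma> y"

lemma ln_normal_density:
  assumes "0 < \<sigma>"
  shows "ln (normal_density a \<sigma> y) = - ln \<sigma> - ln (sqrt (2 * pi)) - (y - a)\<^sup>2 / (2 * \<sigma>\<^sup>2)"
proof -
  have "sqrt (2 * pi * \<sigma>\<^sup>2) = \<sigma> * sqrt (2 * pi)"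
    using assms by (simp add: real_sqrt_mult)
  then show ?thesis
    using assms by (simp add: normal_density_def ln_mult ln_div)
qed

lemma quadratic_diff_expand:
  fixes \<sigma> \<sigma>' a a' y :: real
  assumes "0 < \<sigma>" "0 < \<sigma>'"
  shows "(y - a')\<^sup>2 / (2 * \<sigma>'\<^sup>2) - (y - a)\<^sup>2 / (2 * \<sigma>\<^sup>2)
    = (1 / (2 * \<sigma>'\<^sup>2) - 1 / (2 * \<sigma>\<^sup>2)) * y\<^sup>2 + (a / \<sigma>\<^sup>2 - a' / \<sigma>'\<^sup>2) * y
      + (a'\<^sup>2 / (2 * \<sigma>'\<^sup>2) - a\<^sup>2 / (2 * \<sigma>\<^sup>2))"
  using assms by (simp add: field_simps power2_eq_square)

lemma tail_weighted_density_log_eq: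
  assumes "0 < \<sigma>" "0 < \<sigma>'"
    and "tail_weighted_density \<sigma> a c d y = tail_weighted_density \<sigma>' a' c' d' y"
  shows "(1 / (2 * \<sigma>'\<^sup>2) - 1 / (2 * \<sigma>\<^sup>2)) * y\<^sup>2 + (a / \<sigma>\<^sup>2 - a' / \<sigma>'\<^sup>2) * y
           + (a'\<^sup>2 / (2 * \<sigma>'\<^sup>2) - a\<^sup>2 / (2 * \<sigma>\<^sup>2))
         = ln (std_normal_tail (c' * y + d')) - ln (std_normal_tail (c * y + d)) + ln \<sigma> - ln \<sigma>'"
proof -
  have "ln (tail_weighted_density \<sigma> a c d y) = ln (tail_weighted_density \<sigma>' a' c' d' y)"
    using assms(3) by simp
  then have "ln (std_normal_tail (c * y + d)) - ln \<sigma> - (y - a)\<^sup>2 / (2 * \<sigma>\<^sup>2)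
           = ln (std_normal_tail (c' * y + d')) - ln \<sigma>' - (y - a')\<^sup>2 / (2 * \<sigma>'\<^sup>2)"
    using assms(1,2)
    by (simp add: tail_weighted_density_def ln_normal_density
        ln_mult_pos[OF std_normal_tail_pos normal_density_pos])
  then show ?thesis
    unfolding quadratic_diff_expand[OF assms(1,2), symmetric] by linarith
qed

lemma tail_weighted_density_reflect:
  "tail_weighted_density \<sigma> (- a) (- c) d y = tail_weighted_density \<sigma> a c d (- y)"
  by (simp add: tail_weighted_density_def normal_density_def power2_eq_square algebra_simps)

lemma ln_std_normal_tail_le_0: "ln (std_normal_tail u) \<le> 0"
  using std_normal_tail_pos[of u] std_normal_tail_le_1[of u] by simp

lemma ln_std_normal_tail_antimono: "u \<le> v \<Longrightarrow> ln (std_normal_tail v) \<le> ln (std_normal_tail u)"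
  using std_normal_tail_pos by simp

lemma ln_std_normal_tail_le_square: "0 \<le> u \<Longrightarrow> ln (std_normal_tail u) \<le> - u\<^sup>2 / 2"
  using std_normal_tail_le_exp[of u] std_normal_tail_pos[of u] by (metis exp_gt_zero ln_exp ln_le_cancel_iff)

text \<open>With nonnegative slopes both tail factors stay in \<open>[\<Phi>(-d), 1]\<close> as \<open>y \<rightarrow> -\<infinity>\<close>,
  so the log-ratio of the two normal densities, a quadratic in \<open>y\<close>, must be bounded.\<close>
lemma tail_weighted_density_inject_nonneg_slopes:
  assumes \<sigma>: "0 < \<sigma>" "0 < \<sigma>'" and slopes: "0 \<le> c" "0 \<le> c'"
    and eq: "tail_weighted_density \<sigma> a c d = tail_weighted_density \<sigma>' a' c' d'"
  shows "\<sigma> = \<sigma>' \<and> a = a' \<and> c = c' \<and> d = d'"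
proof -
  define M where "M = \<bar>ln \<sigma> - ln \<sigma>'\<bar> + \<bar>ln (std_normal_tail d)\<bar> + \<bar>ln (std_normal_tail d')\<bar>"
  have "\<forall>\<^sub>F y in at_bot. \<bar>(1 / (2 * \<sigma>'\<^sup>2) - 1 / (2 * \<sigma>\<^sup>2)) * y\<^sup>2 + (a / \<sigma>\<^sup>2 - a' / \<sigma>'\<^sup>2) * y
                           + (a'\<^sup>2 / (2 * \<sigma>'\<^sup>2) - a\<^sup>2 / (2 * \<sigma>\<^sup>2))\<bar> \<le> M"
    using eventually_le_at_bot[of 0]
  proof eventually_elim
    case (elim y)
    with slopes have "c * y + d \<le> d" "c' * y + d' \<le> d'"
      by (simp_all add: mult_nonneg_nonpos)
    then have "ln (std_normal_tail d) \<le> ln (std_normal_tail (c * y + d))"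
      "ln (std_normal_tail d') \<le> ln (std_normal_tail (c' * y + d'))"
      by (simp_all add: ln_std_normal_tail_antimono)
    then show ?case
      unfolding tail_weighted_density_log_eq[OF \<sigma> fun_cong[OF eq]] M_def abs_le_iff
      using ln_std_normal_tail_le_0[of "c * y + d"] ln_std_normal_tail_le_0[of "c' * y + d'"]
        abs_ge_self[of "ln \<sigma> - ln \<sigma>'"] abs_ge_minus_self[of "ln \<sigma> - ln \<sigma>'"]
        abs_ge_minus_self[of "ln (std_normal_tail d)"] abs_ge_minus_self[of "ln (std_normal_tail d')"]
      by linarith
  qed
  then have "1 / (2 * \<sigma>'\<^sup>2) - 1 / (2 * \<sigma>\<^sup>2) = 0" "a / \<sigma>\<^sup>2 - a' / \<sigma>'\<^sup>2 = 0"
    by (blast dest: quadratic_bounded_at_bot)+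
  with \<sigma> have \<sigma>a: "\<sigma> = \<sigma>'" "a = a'"
    by (auto simp: field_simps)
  have tail_eq: "std_normal_tail (c * y + d) = std_normal_tail (c' * y + d')" for y
    using fun_cong[OF eq, of y] \<sigma>a normal_density_pos[OF \<sigma>(1), of a y]
    by (simp add: tail_weighted_density_def)
  from tail_eq[of 0] tail_eq[of 1] \<sigma>a show ?thesis
    by simp
qed

text \<open>With slopes of opposite sign, the tail factor with negative slope decays like a Gaussian
  as \<open>y \<rightarrow> -\<infinity>\<close>; this forces an inequality between the leading coefficients.\<close>
lemma tail_weighted_density_opposite_slopes_coeff:
  assumes \<sigma>: "0 < \<sigma>" "0 < \<sigma>'" and slopes: "0 \<le> c" "c' < 0"
    and eq: "tail_weighted_density \<sigma> a c d = tail_weighted_density \<sigma>' a' c' d'"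
  shows "1 / (2 * \<sigma>'\<^sup>2) - 1 / (2 * \<sigma>\<^sup>2) + c'\<^sup>2 / 2 \<le> 0"
proof -
  have "filterlim (\<lambda>y. c' * y + d') at_top at_bot"
    using slopes by real_asymp
  then have "\<forall>\<^sub>F y in at_bot. 0 \<le> c' * y + d'"
    by (simp add: filterlim_at_top)
  then have "\<forall>\<^sub>F y in at_bot.
      (1 / (2 * \<sigma>'\<^sup>2) - 1 / (2 * \<sigma>\<^sup>2) + c'\<^sup>2 / 2) * y\<^sup>2 + (a / \<sigma>\<^sup>2 - a' / \<sigma>'\<^sup>2 + c' * d') * y
        + (a'\<^sup>2 / (2 * \<sigma>'\<^sup>2) - a\<^sup>2 / (2 * \<sigma>\<^sup>2) + d'\<^sup>2 / 2)
      \<le> ln \<sigma> - ln \<sigma>' - ln (std_normal_tail d)"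
    using eventually_le_at_bot[of 0]
  proof eventually_elim
    case (elim y)
    with slopes have "c * y + d \<le> d"
      by (simp add: mult_nonneg_nonpos)
    then have "ln (std_normal_tail d) \<le> ln (std_normal_tail (c * y + d))"
      by (rule ln_std_normal_tail_antimono)
    moreover have "ln (std_normal_tail (c' * y + d')) \<le> - (c' * y + d')\<^sup>2 / 2"
      using elim(1) by (rule ln_std_normal_tail_le_square)
    moreover have "(1 / (2 * \<sigma>'\<^sup>2) - 1 / (2 * \<sigma>\<^sup>2) + c'\<^sup>2 / 2) * y\<^sup>2
        + (a / \<sigma>\<^sup>2 - a' / \<sigma>'\<^sup>2 + c' * d') * y + (a'\<^sup>2 / (2 * \<sigma>'\<^sup>2) - a\<^sup>2 / (2 * \<sigma>\<^sup>2) + d'\<^sup>2 / 2)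
      = (1 / (2 * \<sigma>'\<^sup>2) - 1 / (2 * \<sigma>\<^sup>2)) * y\<^sup>2 + (a / \<sigma>\<^sup>2 - a' / \<sigma>'\<^sup>2) * y
        + (a'\<^sup>2 / (2 * \<sigma>'\<^sup>2) - a\<^sup>2 / (2 * \<sigma>\<^sup>2)) + (c' * y + d')\<^sup>2 / 2"
      by (simp add: power2_eq_square algebra_simps)
    ultimately show ?case
      using tail_weighted_density_log_eq[OF \<sigma> fun_cong[OF eq, of y]] by linarith
  qed
  then show ?thesis
    by (auto dest: quadratic_bounded_above_at_bot)
qed

lemma tail_weighted_density_opposite_slopes:
  assumes \<sigma>: "0 < \<sigma>" "0 < \<sigma>'" and slopes: "0 < c" "c' < 0"
    and eq: "tail_weighted_density \<sigma> a c d = tail_weighted_density \<sigma>' a' c' d'"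
  shows False
proof -
  have "tail_weighted_density \<sigma>' (- a') (- c') d' = tail_weighted_density \<sigma> (- a) (- c) d"
    by (simp add: fun_eq_iff tail_weighted_density_reflect eq)
  with assms have "1 / (2 * \<sigma>\<^sup>2) - 1 / (2 * \<sigma>'\<^sup>2) + c\<^sup>2 / 2 \<le> 0"
    using tail_weighted_density_opposite_slopes_coeff[of \<sigma>' \<sigma> "- c'" "- c"] by simp
  moreover have "1 / (2 * \<sigma>'\<^sup>2) - 1 / (2 * \<sigma>\<^sup>2) + c'\<^sup>2 / 2 \<le> 0"
    using tail_weighted_density_opposite_slopes_coeff[OF \<sigma> _ slopes(2) eq] slopes(1) by simp
  moreover have "0 < c\<^sup>2" "0 \<le> c'\<^sup>2"
    using slopes by simp_all
  ultimately show False
    by linarith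
qed

lemma tail_weighted_density_inject:
  assumes "0 < \<sigma>" "0 < \<sigma>'"
  shows "tail_weighted_density \<sigma> a c d = tail_weighted_density \<sigma>' a' c' d'
     \<longleftrightarrow> \<sigma> = \<sigma>' \<and> a = a' \<and> c = c' \<and> d = d'"
proof
  assume eq: "tail_weighted_density \<sigma> a c d = tail_weighted_density \<sigma>' a' c' d'"
  have eq_reflected:
    "tail_weighted_density \<sigma> (- a) (- c) d = tail_weighted_density \<sigma>' (- a') (- c') d'"
    by (simp add: fun_eq_iff tail_weighted_density_reflect eq)
  consider "0 \<le> c" "0 \<le> c'" | "c \<le> 0" "c' \<le> 0" | "0 < c" "c' < 0" | "c < 0" "0 < c'"
    by linarith
  then show "\<sigma> = \<sigma>' \<and> a = a' \<and> c = c' \<and> d = d'"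
  proof cases
    case 1
    then show ?thesis using tail_weighted_density_inject_nonneg_slopes[OF assms _ _ eq] by simp
  next
    case 2
    then show ?thesis using tail_weighted_density_inject_nonneg_slopes[OF assms _ _ eq_reflected] by simp
  next
    case 3
    then show ?thesis using tail_weighted_density_opposite_slopes[OF assms _ _ eq] by simp
  next
    case 4
    then show ?thesis using tail_weighted_density_opposite_slopes[OF assms(2,1) _ _ eq[symmetric]] by simp
  qed
qed simp

lemma integrable_mult_of_square_integrable:
  fixes f g :: "'a \<Rightarrow> real"
  assumes "f \<in> borel_measurable M" "g \<in> borel_measurable M"
    and "integrable M (\<lambda>x. (f x)\<^sup>2)" "integrable M (\<lambda>x. (g x)\<^sup>2)"
  shows "integrable M (\<lambda>x. f x * g x)"
proof (rule Bochner_Integration.integrable_bound)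
  show "integrable M (\<lambda>x. (f x)\<^sup>2 + (g x)\<^sup>2)"
    using assms by simp
  show "(\<lambda>x. f x * g x) \<in> borel_measurable M"
    using assms by simp
  have "\<bar>f x * g x\<bar> \<le> (f x)\<^sup>2 + (g x)\<^sup>2" for x
  proof -
    have "2 * (\<bar>f x\<bar> * \<bar>g x\<bar>) \<le> (f x)\<^sup>2 + (g x)\<^sup>2"
      using sum_squares_bound[of "\<bar>f x\<bar>" "\<bar>g x\<bar>"] by (simp add: mult.assoc)
    moreover have "0 \<le> \<bar>f x\<bar> * \<bar>g x\<bar>"
      by simp
    ultimately show ?thesis
      unfolding abs_mult by linarith
  qed
  then show "AE x in M. norm (f x * g x) \<le> norm ((f x)\<^sup>2 + (g x)\<^sup>2)"
    by simp
qed

lemma (in prob_space) cov_matrix_mult_eq_0_of_AE_const: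
  assumes meas: "\<forall>i<n. (\<lambda>\<omega>. U \<omega> i) \<in> borel_measurable M"
    and sq_int: "\<forall>i<n. integrable M (\<lambda>\<omega>. (U \<omega> i)\<^sup>2)"
    and const: "AE \<omega> in M. (\<Sum>j<n. c j * U \<omega> j) = d"
    and "i < n"
  shows "(\<Sum>j<n. cov_matrix M U i j * c j) = 0"
proof -
  define S where "S \<omega> = (\<Sum>j<n. c j * U \<omega> j)" for \<omega>
  have S_meas: "S \<in> borel_measurable M"
    unfolding S_def using meas by (intro borel_measurable_sum borel_measurable_times) auto
  have S_const: "AE \<omega> in M. S \<omega> = d"
    using const by (simp add: S_def)
  have int: "integrable M (\<lambda>\<omega>. U \<omega> j)" if "j < n" for j
    by (rule square_integrable_imp_integrable) (use meas sq_int that in auto)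
  have int_mult: "integrable M (\<lambda>\<omega>. U \<omega> i * U \<omega> j)" if "j < n" for j
    by (rule integrable_mult_of_square_integrable) (use meas sq_int that \<open>i < n\<close> in auto)
  have "(\<Sum>j<n. cov_matrix M U i j * c j)
      = (\<Sum>j<n. c j * (\<integral>\<omega>. U \<omega> i * U \<omega> j \<partial>M))
        - (\<integral>\<omega>. U \<omega> i \<partial>M) * (\<Sum>j<n. c j * (\<integral>\<omega>. U \<omega> j \<partial>M))"
    by (simp add: cov_matrix_def right_diff_distrib sum_subtractf sum_distrib_left ac_simps)
  also have "(\<Sum>j<n. c j * (\<integral>\<omega>. U \<omega> i * U \<omega> j \<partial>M))
      = (\<integral>\<omega>. (\<Sum>j<n. c j * (U \<omega> i * U \<omega> j)) \<partial>M)"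
    by (simp add: int_mult)
  also have "\<dots> = (\<integral>\<omega>. U \<omega> i * S \<omega> \<partial>M)"
    by (simp add: S_def sum_distrib_left mult.left_commute)
  also have "\<dots> = (\<integral>\<omega>. U \<omega> i * d \<partial>M)"
    using S_const S_meas meas \<open>i < n\<close> by (intro integral_cong_AE) auto
  also have "(\<Sum>j<n. c j * (\<integral>\<omega>. U \<omega> j \<partial>M)) = (\<integral>\<omega>. S \<omega> \<partial>M)"
    by (simp add: S_def int)
  also have "\<dots> = (\<integral>\<omega>. d \<partial>M)"
    using S_const S_meas by (intro integral_cong_AE) auto
  finally show ?thesis
    by (simp add: prob_space)
qed

lemma (in prob_space) AE_const_lincomb_coeffs_eq_0:
  assumes "\<forall>i<n. (\<lambda>\<omega>. U \<omega> i) \<in> borel_measurable M"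
    and "\<forall>i<n. integrable M (\<lambda>\<omega>. (U \<omega> i)\<^sup>2)"
    and "full_rank_mat n (cov_matrix M U)"
    and "AE \<omega> in M. (\<Sum>j<n. c j * U \<omega> j) = d"
  shows "\<forall>j<n. c j = 0"
  using assms cov_matrix_mult_eq_0_of_AE_const[OF assms(1,2,4)] unfolding full_rank_mat_def by blast

definition linear_predictor :: "real list \<Rightarrow> real \<Rightarrow> real \<Rightarrow> real list \<Rightarrow> real \<Rightarrow> real \<Rightarrow> real" where
  "linear_predictor b \<alpha> l xt z v = lin xt b + z * \<alpha> + v * l"

lemma linear_predictor_AE_inject:
  fixes M :: "'a measure" and Xt :: "'a \<Rightarrow> real list" and Z V :: "'a \<Rightarrow> real"
  assumes "prob_space M"
    and dim: "\<forall>\<omega>\<in>space M. length (Xt \<omega>) = m"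
    and U_def: "U = (\<lambda>\<omega> i. if i < m then Xt \<omega> ! i else if i = m then Z \<omega> else V \<omega>)"
    and meas: "\<forall>i<m+2. (\<lambda>\<omega>. U \<omega> i) \<in> borel_measurable M"
    and sq_int: "\<forall>i<m+2. integrable M (\<lambda>\<omega>. (U \<omega> i)\<^sup>2)"
    and rank: "full_rank_mat (m+2) (cov_matrix M U)"
    and len: "length b = m + 1" "length b' = m + 1"
    and eq: "AE \<omega> in M. linear_predictor b \<alpha> l (Xt \<omega>) (Z \<omega>) (V \<omega>)
                       = linear_predictor b' \<alpha>' l' (Xt \<omega>) (Z \<omega>) (V \<omega>)"
  shows "b = b' \<and> \<alpha> = \<alpha>' \<and> l = l'"
proof -
  interpret prob_space M by fact
  define c where "c j = (if j < m then b ! (j+1) - b' ! (j+1) else if j = m then \<alpha> - \<alpha>' else l - l')" for j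
  have "AE \<omega> in M. (\<Sum>j<m+2. c j * U \<omega> j) = b' ! 0 - b ! 0"
    using eq
  proof (rule AE_mp, intro AE_I2 impI)
    fix \<omega> assume "\<omega> \<in> space M"
      and eq\<omega>: "linear_predictor b \<alpha> l (Xt \<omega>) (Z \<omega>) (V \<omega>) = linear_predictor b' \<alpha>' l' (Xt \<omega>) (Z \<omega>) (V \<omega>)"
    with dim have len\<omega>: "length (Xt \<omega>) = m" by blast
    have "(\<Sum>j<m+2. c j * U \<omega> j) = (\<Sum>j<m. c j * U \<omega> j) + c m * U \<omega> m + c (m+1) * U \<omega> (m+1)"
      by (simp add: numeral_2_eq_2)
    also have "\<dots> = (\<Sum>i<m. Xt \<omega> ! i * b ! (i+1)) - (\<Sum>i<m. Xt \<omega> ! i * b' ! (i+1))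
                    + (Z \<omega> * \<alpha> - Z \<omega> * \<alpha>') + (V \<omega> * l - V \<omega> * l')"
      unfolding sum_subtractf[symmetric] by (simp add: c_def U_def algebra_simps)
    finally show "(\<Sum>j<m+2. c j * U \<omega> j) = b' ! 0 - b ! 0"
      using eq\<omega> len\<omega> by (simp add: linear_predictor_def lin_def)
  qed
  then have c0: "\<forall>j<m+2. c j = 0"
    using AE_const_lincomb_coeffs_eq_0[OF meas sq_int rank] by blast
  then have "AE \<omega> in M. b' ! 0 - b ! 0 = 0"
    using \<open>AE \<omega> in M. (\<Sum>j<m+2. c j * U \<omega> j) = b' ! 0 - b ! 0\<close> by simp
  then have "b ! 0 = b' ! 0"
    by simp
  moreover have "b ! (i+1) = b' ! (i+1)" if "i < m" for i
    using c0[rule_format, of i] that by (simp add: c_def)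
  ultimately have "b = b'"
    using len by (intro nth_equalityI) (auto simp: less_Suc_eq_0_disj)
  moreover have "\<alpha> = \<alpha>'" "l = l'"
    using c0[rule_format, of m] c0[rule_format, of "m+1"] by (simp_all add: c_def)
  ultimately show ?thesis
    by simp
qed

text \<open>The density of \<open>min(T, C)\<close> on the event \<open>T \<le> C\<close>, for \<open>(T, C)\<close> bivariate normal with means
  \<open>m, m'\<close>, standard deviations \<open>\<sigma>, \<sigma>'\<close> and correlation \<open>r\<close>.\<close>
definition competing_subdensity :: "real \<Rightarrow> real \<Rightarrow> real \<Rightarrow> real \<Rightarrow> real \<Rightarrow> real \<Rightarrow> real" where
  "competing_subdensity \<sigma> \<sigma>' r m m' y =
     1 / \<sigma> * std_normal_tail ((y - m' - r * (\<sigma>' / \<sigma>) * (y - m)) / (\<sigma>' * sqrt (1 - r\<^sup>2)))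
       * std_normal_density ((y - m) / \<sigma>)"

lemma subdens_eq_competing_subdensity:
  fixes g :: "'g \<Rightarrow> real \<Rightarrow> real list \<Rightarrow> real \<Rightarrow> real" and \<gamma> z xt wt
  defines "v \<equiv> g \<gamma> z xt wt"
  shows "subdens g \<gamma> th xt wt z y 1 = competing_subdensity (sigmaT th) (sigmaC th) (rho th)
           (linear_predictor (betaT th) (alphaT th) (lambdaT th) xt z v)
           (linear_predictor (betaC th) (alphaC th) (lambdaC th) xt z v) y"
    and "subdens g \<gamma> th xt wt z y 0 = competing_subdensity (sigmaC th) (sigmaT th) (rho th)
           (linear_predictor (betaC th) (alphaC th) (lambdaC th) xt z v)
           (linear_predictor (betaT th) (alphaT th) (lambdaT th) xt z v) y"
  by (simp_all add: subdens_def Let_def competing_subdensity_def linear_predictor_def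
      std_normal_tail_def v_def diff_diff_eq)

lemma std_normal_density_scaled:
  assumes "0 < \<sigma>"
  shows "1 / \<sigma> * std_normal_density ((y - m) / \<sigma>) = normal_density m \<sigma> y"
proof -
  have "sqrt (2 * pi * \<sigma>\<^sup>2) = \<sigma> * sqrt (2 * pi)"
    using assms by (simp add: real_sqrt_mult)
  then show ?thesis
    using assms by (simp add: normal_density_def power_divide)
qed

lemma competing_subdensity_eq_tail_weighted_density:
  assumes "0 < \<sigma>"
  shows "competing_subdensity \<sigma> \<sigma>' r m m'
    = tail_weighted_density \<sigma> m ((1 - r * (\<sigma>' / \<sigma>)) / (\<sigma>' * sqrt (1 - r\<^sup>2)))
        ((r * (\<sigma>' / \<sigma>) * m - m') / (\<sigma>' * sqrt (1 - r\<^sup>2)))"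
proof
  fix y
  have "(y - m' - r * (\<sigma>' / \<sigma>) * (y - m)) / (\<sigma>' * sqrt (1 - r\<^sup>2))
      = (1 - r * (\<sigma>' / \<sigma>)) / (\<sigma>' * sqrt (1 - r\<^sup>2)) * y + (r * (\<sigma>' / \<sigma>) * m - m') / (\<sigma>' * sqrt (1 - r\<^sup>2))"
    by (simp add: add_divide_distrib[symmetric] algebra_simps)
  moreover have "competing_subdensity \<sigma> \<sigma>' r m m' y
      = std_normal_tail ((y - m' - r * (\<sigma>' / \<sigma>) * (y - m)) / (\<sigma>' * sqrt (1 - r\<^sup>2)))
        * (1 / \<sigma> * std_normal_density ((y - m) / \<sigma>))"
    by (simp add: competing_subdensity_def)
  ultimately show "competing_subdensity \<sigma> \<sigma>' r m m' y = tail_weighted_density \<sigma> m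
      ((1 - r * (\<sigma>' / \<sigma>)) / (\<sigma>' * sqrt (1 - r\<^sup>2))) ((r * (\<sigma>' / \<sigma>) * m - m') / (\<sigma>' * sqrt (1 - r\<^sup>2))) y"
    by (simp only: tail_weighted_density_def std_normal_density_scaled[OF assms])
qed

lemma inj_on_one_minus_div_sqrt: "inj_on (\<lambda>r. (1 - r) / sqrt (1 - r\<^sup>2)) {-1<..<1}"
proof (rule inj_onI)
  have square: "((1 - r) / sqrt (1 - r\<^sup>2))\<^sup>2 = (1 - r) / (1 + r)" if "r \<in> {-1<..<1}" for r :: real
  proof -
    from that have "0 < 1 - r" "0 < 1 + r"
      by auto
    moreover have "1 - r\<^sup>2 = (1 - r) * (1 + r)"
      by (simp add: power2_eq_square algebra_simps)
    ultimately show ?thesis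
      by (simp add: power_divide power2_eq_square)
  qed
  fix r r' :: real
  assume "r \<in> {-1<..<1}" "r' \<in> {-1<..<1}"
    and "(1 - r) / sqrt (1 - r\<^sup>2) = (1 - r') / sqrt (1 - r'\<^sup>2)"
  then have "(1 - r) / (1 + r) = (1 - r') / (1 + r')"
    using square by metis
  with \<open>r \<in> {-1<..<1}\<close> \<open>r' \<in> {-1<..<1}\<close> show "r = r'"
    by (simp add: field_simps)
qed

text \<open>The slopes of the two tail factors determine the correlation: adding the cleared forms of
  the two equations leaves \<open>(1 - r) / sqrt (1 - r\<^sup>2)\<close>, which is injective.\<close>
lemma correlation_eq_of_slopes_eq:
  fixes \<sigma> \<sigma>' r r' :: real
  assumes "0 < \<sigma>" "0 < \<sigma>'" "\<bar>r\<bar> < 1" "\<bar>r'\<bar> < 1"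
    and slope: "(1 - r * (\<sigma>' / \<sigma>)) / (\<sigma>' * sqrt (1 - r\<^sup>2)) = (1 - r' * (\<sigma>' / \<sigma>)) / (\<sigma>' * sqrt (1 - r'\<^sup>2))"
    and slope': "(1 - r * (\<sigma> / \<sigma>')) / (\<sigma> * sqrt (1 - r\<^sup>2)) = (1 - r' * (\<sigma> / \<sigma>')) / (\<sigma> * sqrt (1 - r'\<^sup>2))"
  shows "r = r'"
proof -
  define s s' where "s = sqrt (1 - r\<^sup>2)" and "s' = sqrt (1 - r'\<^sup>2)"
  have "0 < s" "0 < s'"
    using assms(3,4) by (simp_all add: s_def s'_def abs_square_less_1)
  have "\<sigma> * \<sigma>' * ((\<sigma> - r * \<sigma>') * s') = \<sigma> * \<sigma>' * ((\<sigma> - r' * \<sigma>') * s)"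
    using slope assms(1,2) \<open>0 < s\<close> \<open>0 < s'\<close> unfolding s_def[symmetric] s'_def[symmetric]
    by (simp add: field_simps)
  moreover have "\<sigma> * \<sigma>' * ((\<sigma>' - r * \<sigma>) * s') = \<sigma> * \<sigma>' * ((\<sigma>' - r' * \<sigma>) * s)"
    using slope' assms(1,2) \<open>0 < s\<close> \<open>0 < s'\<close> unfolding s_def[symmetric] s'_def[symmetric]
    by (simp add: field_simps)
  ultimately have "(\<sigma> - r * \<sigma>') * s' = (\<sigma> - r' * \<sigma>') * s" "(\<sigma>' - r * \<sigma>) * s' = (\<sigma>' - r' * \<sigma>) * s"
    using assms(1,2) by simp_all
  then have "(\<sigma> + \<sigma>') * ((1 - r) * s') = (\<sigma> + \<sigma>') * ((1 - r') * s)"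
    by algebra
  moreover have "\<sigma> + \<sigma>' \<noteq> 0"
    using assms(1,2) by simp
  ultimately have "(1 - r) * s' = (1 - r') * s"
    by simp
  then have "(1 - r) / s = (1 - r') / s'"
    using \<open>0 < s\<close> \<open>0 < s'\<close> by (simp add: frac_eq_eq)
  then show ?thesis
    using inj_on_one_minus_div_sqrt assms(3,4) unfolding s_def s'_def inj_on_def
    by (simp add: abs_less_iff)
qed

lemma competing_subdensities_inject:
  assumes \<sigma>: "0 < \<sigma>T" "0 < \<sigma>C" "0 < \<sigma>T'" "0 < \<sigma>C'" and r: "\<bar>r\<bar> < 1" "\<bar>r'\<bar> < 1"
    and eqT: "competing_subdensity \<sigma>T \<sigma>C r mT mC = competing_subdensity \<sigma>T' \<sigma>C' r' mT' mC'"
    and eqC: "competing_subdensity \<sigma>C \<sigma>T r mC mT = competing_subdensity \<sigma>C' \<sigma>T' r' mC' mT'"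
  shows "\<sigma>T = \<sigma>T' \<and> \<sigma>C = \<sigma>C' \<and> r = r' \<and> mT = mT' \<and> mC = mC'"
proof -
  from eqT have T: "\<sigma>T = \<sigma>T'" "mT = mT'"
    and slopeT: "(1 - r * (\<sigma>C / \<sigma>T)) / (\<sigma>C * sqrt (1 - r\<^sup>2)) = (1 - r' * (\<sigma>C' / \<sigma>T')) / (\<sigma>C' * sqrt (1 - r'\<^sup>2))"
    unfolding competing_subdensity_eq_tail_weighted_density[OF \<sigma>(1)]
      competing_subdensity_eq_tail_weighted_density[OF \<sigma>(3)] tail_weighted_density_inject[OF \<sigma>(1,3)]
    by blast+
  from eqC have C: "\<sigma>C = \<sigma>C'" "mC = mC'"
    and slopeC: "(1 - r * (\<sigma>T / \<sigma>C)) / (\<sigma>T * sqrt (1 - r\<^sup>2)) = (1 - r' * (\<sigma>T' / \<sigma>C')) / (\<sigma>T' * sqrt (1 - r'\<^sup>2))"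
    unfolding competing_subdensity_eq_tail_weighted_density[OF \<sigma>(2)]
      competing_subdensity_eq_tail_weighted_density[OF \<sigma>(4)] tail_weighted_density_inject[OF \<sigma>(2,4)]
    by blast+
  have "r = r'"
    using correlation_eq_of_slopes_eq[OF \<sigma>(1,2) r] slopeT slopeC T C by simp
  with T C show ?thesis
    by simp
qed

lemma subdens_inject:
  fixes g :: "'g \<Rightarrow> real \<Rightarrow> real list \<Rightarrow> real \<Rightarrow> real" and \<gamma> z xt wt
  defines "v \<equiv> g \<gamma> z xt wt"
  assumes "valid_theta m th" "valid_theta m th'"
    and eq: "\<forall>k\<in>{0,1::nat}. \<forall>y. subdens g \<gamma> th xt wt z y k = subdens g \<gamma> th' xt wt z y k"
  shows "sigmaT th = sigmaT th' \<and> sigmaC th = sigmaC th' \<and> rho th = rho th'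
    \<and> linear_predictor (betaT th) (alphaT th) (lambdaT th) xt z v
      = linear_predictor (betaT th') (alphaT th') (lambdaT th') xt z v
    \<and> linear_predictor (betaC th) (alphaC th) (lambdaC th) xt z v
      = linear_predictor (betaC th') (alphaC th') (lambdaC th') xt z v"
proof -
  define mT mC mT' mC'
    where "mT = linear_predictor (betaT th) (alphaT th) (lambdaT th) xt z v"
      and "mC = linear_predictor (betaC th) (alphaC th) (lambdaC th) xt z v"
      and "mT' = linear_predictor (betaT th') (alphaT th') (lambdaT th') xt z v"
      and "mC' = linear_predictor (betaC th') (alphaC th') (lambdaC th') xt z v"
  from eq have "\<forall>y. subdens g \<gamma> th xt wt z y 1 = subdens g \<gamma> th' xt wt z y 1"
    and "\<forall>y. subdens g \<gamma> th xt wt z y 0 = subdens g \<gamma> th' xt wt z y 0"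
    by blast+
  then have "competing_subdensity (sigmaT th) (sigmaC th) (rho th) mT mC
           = competing_subdensity (sigmaT th') (sigmaC th') (rho th') mT' mC'"
    and "competing_subdensity (sigmaC th) (sigmaT th) (rho th) mC mT
           = competing_subdensity (sigmaC th') (sigmaT th') (rho th') mC' mT'"
    unfolding subdens_eq_competing_subdensity fun_eq_iff mT_def mC_def mT'_def mC'_def v_def .
  moreover have "0 < sigmaT th" "0 < sigmaC th" "0 < sigmaT th'" "0 < sigmaC th'"
    and "\<bar>rho th\<bar> < 1" "\<bar>rho th'\<bar> < 1"
    using assms(2,3) by (simp_all add: valid_theta_def)
  ultimately show ?thesis
    unfolding mT_def[symmetric] mC_def[symmetric] mT'_def[symmetric] mC'_def[symmetric]
    by (intro competing_subdensities_inject)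
qed

theorem theorem1:
  fixes m :: nat
    and \<mu> :: "'a measure"
    and Xt :: "'a \<Rightarrow> real list" and Wt :: "'a \<Rightarrow> real" and Z :: "'a \<Rightarrow> real"
    and \<Gamma> :: "'g set"
    and g :: "'g \<Rightarrow> real \<Rightarrow> real list \<Rightarrow> real \<Rightarrow> real"
    and \<gamma> \<gamma>s :: 'g
    and \<theta> \<theta>s :: theta
  defines "V \<equiv> (\<lambda>\<omega>. g \<gamma>s (Z \<omega>) (Xt \<omega>) (Wt \<omega>))"
  defines "U \<equiv> (\<lambda>\<omega> i. if i < m then Xt \<omega> ! i else if i = m then Z \<omega> else V \<omega>)"
  assumes prob: "prob_space \<mu>"
    and dimX: "\<forall>\<omega>\<in>space \<mu>. length (Xt \<omega>) = m"
    and params: "\<gamma> \<in> \<Gamma>" "\<gamma>s \<in> \<Gamma>" "valid_theta m \<theta>" "valid_theta m \<theta>s"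
    (* (A3): covariance matrix of (Xtilde, Z, V) exists and is full rank; Var(Wtilde) > 0 *)
    and A3_meas: "\<forall>i<m+2. (\<lambda>\<omega>. U \<omega> i) \<in> borel_measurable \<mu>"
    and A3_int: "\<forall>i<m+2. integrable \<mu> (\<lambda>\<omega>. (U \<omega> i)\<^sup>2)"
    and A3_rank: "full_rank_mat (m+2) (cov_matrix \<mu> U)"
    and A3_W: "Wt \<in> borel_measurable \<mu>" "integrable \<mu> (\<lambda>\<omega>. (Wt \<omega>)\<^sup>2)"
              "prob_space.variance \<mu> Wt > 0"
    (* (A4): P(Y = T | W,Z) > 0 and P(Y = C | W,Z) > 0 a.s. *)
    and A4: "AE \<omega> in \<mu>. (\<forall>k\<in>{0,1::nat}.
               (\<integral>y. subdens g \<gamma>s \<theta>s (Xt \<omega>) (Wt \<omega>) (Z \<omega>) y k \<partial>lborel) > 0)"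
    (* (A5): gamma* is identified from the distribution of the observed data *)
    and A5: "\<forall>\<gamma>'\<in>\<Gamma>. \<forall>\<theta>'. valid_theta m \<theta>' \<longrightarrow>
               (AE \<omega> in \<mu>. \<forall>k\<in>{0,1::nat}. \<forall>y.
                  subdens g \<gamma>' \<theta>' (Xt \<omega>) (Wt \<omega>) (Z \<omega>) y k
                  = subdens g \<gamma>s \<theta>s (Xt \<omega>) (Wt \<omega>) (Z \<omega>) y k) \<longrightarrow> \<gamma>' = \<gamma>s"
    (* hypothesis: equal conditional sub-densities for a.e. (w,z) *)
    and eq: "AE \<omega> in \<mu>. \<forall>k\<in>{0,1::nat}. \<forall>y.
               subdens g \<gamma> \<theta> (Xt \<omega>) (Wt \<omega>) (Z \<omega>) y k
               = subdens g \<gamma>s \<theta>s (Xt \<omega>) (Wt \<omega>) (Z \<omega>) y k"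
  shows "\<gamma> = \<gamma>s \<and> \<theta> = \<theta>s"
proof -
  interpret prob_space \<mu> by (rule prob)
  have "\<gamma> = \<gamma>s"
    using A5 params eq by blast
  have "AE \<omega> in \<mu>. sigmaT \<theta> = sigmaT \<theta>s \<and> sigmaC \<theta> = sigmaC \<theta>s \<and> rho \<theta> = rho \<theta>s
    \<and> linear_predictor (betaT \<theta>) (alphaT \<theta>) (lambdaT \<theta>) (Xt \<omega>) (Z \<omega>) (V \<omega>)
      = linear_predictor (betaT \<theta>s) (alphaT \<theta>s) (lambdaT \<theta>s) (Xt \<omega>) (Z \<omega>) (V \<omega>)
    \<and> linear_predictor (betaC \<theta>) (alphaC \<theta>) (lambdaC \<theta>) (Xt \<omega>) (Z \<omega>) (V \<omega>)
      = linear_predictor (betaC \<theta>s) (alphaC \<theta>s) (lambdaC \<theta>s) (Xt \<omega>) (Z \<omega>) (V \<omega>)"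
    using eq unfolding V_def \<open>\<gamma> = \<gamma>s\<close>
    by eventually_elim (rule subdens_inject[OF params(3,4)])
  then have scales: "sigmaT \<theta> = sigmaT \<theta>s" "sigmaC \<theta> = sigmaC \<theta>s" "rho \<theta> = rho \<theta>s"
    and mean_T: "AE \<omega> in \<mu>. linear_predictor (betaT \<theta>) (alphaT \<theta>) (lambdaT \<theta>) (Xt \<omega>) (Z \<omega>) (V \<omega>)
      = linear_predictor (betaT \<theta>s) (alphaT \<theta>s) (lambdaT \<theta>s) (Xt \<omega>) (Z \<omega>) (V \<omega>)"
    and mean_C: "AE \<omega> in \<mu>. linear_predictor (betaC \<theta>) (alphaC \<theta>) (lambdaC \<theta>) (Xt \<omega>) (Z \<omega>) (V \<omega>)
      = linear_predictor (betaC \<theta>s) (alphaC \<theta>s) (lambdaC \<theta>s) (Xt \<omega>) (Z \<omega>) (V \<omega>)"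
    by (simp_all add: AE_conj_iff)
  note regression_inject =
    linear_predictor_AE_inject[OF prob dimX U_def[THEN meta_eq_to_obj_eq] A3_meas A3_int A3_rank]
  have "betaT \<theta> = betaT \<theta>s \<and> alphaT \<theta> = alphaT \<theta>s \<and> lambdaT \<theta> = lambdaT \<theta>s"
    using regression_inject[OF _ _ mean_T] params(3,4) by (simp add: valid_theta_def)
  moreover have "betaC \<theta> = betaC \<theta>s \<and> alphaC \<theta> = alphaC \<theta>s \<and> lambdaC \<theta> = lambdaC \<theta>s"
    using regression_inject[OF _ _ mean_C] params(3,4) by (simp add: valid_theta_def)
  ultimately show ?thesis
    using scales \<open>\<gamma> = \<gamma>s\<close> by (simp add: theta.equality)
qed

end
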